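(* Under the hypotheses that $S$ is a spray, $U\subset\mathcal TM$ is open, $C_u\notin\mathcal H_u$ for all $u\in U$ and $\mathcal H$ has constant rank on $U$: every first order formal solution of $P^2_F=(\mathcal L_CE-2E,\ P_{\mathfrak h}E)$ at a point $u\in U$ lifts to a second order formal solution, i.e. the projection $R_{2,u}(P^2_F)\to R_{1,u}(P^2_F)$ is surjective, where $R_{1,u}$ is the set of 1-jets $j_{1,u}E$ with $(P^2_FE)(u)=0$ and $R_{2,u}$ is the set of 2-jets $j_{2,u}E$ such that $P^2_FE$ and its first derivatives vanish at $u$.
   Context: Let $M$ be a smooth $n$-manifold, $\mathcal{T}M=TM\setminus\{0\}$, $(x^i,y^i)$ induced coordinates on $TM$. A spray is $S=y^i\frac{\partial}{\partial x^i}+f^i(x,y)\frac{\partial}{\partial y^i}$ on $\mathcal TM$ with $f^i$ positively homogeneous of degree 2 in $y$. Put $\Gamma^i_j=-\frac12\frac{\partial f^i}{\partial y^j}$; horizontal vector fields are spanned by $h_i=\frac{\partial}{\partial x^i}-\Gamma^\alpha_i\frac{\partial}{\partial y^\alpha}$. $C=y^i\frac{\partial}{\partial y^i}$. The holonomy distribution $\mathcal H$ has fibre $\mathcal H_u$ spanned by the values at $u$ of all local horizontal vector fields and all their iterated Lie brackets. $\mathfrak h$ is a vector bundle endomorphism of $T(TM)|_U$ with $\mathfrak h^2=\mathfrak h$ and image $\mathcal H$, and $P_{\mathfrak h}E$ is the 1-form $X\mapsto(\mathfrak hX)(E)$. *)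

theory Defs
  imports "HOL-Analysis.Analysis"
begin

text \<open>M is an open set X of R^n (a coordinate chart),
  TM = X x R^n with induced coordinates (x,y), and the slit tangent bundle is
  X x (R^n - {0}). Tangent vectors to TM are elements of R^n x R^n.\<close>

type_synonym 'n tp = "(real^'n) \<times> (real^('n::finite))"

definition pd :: "'a::real_normed_vector \<Rightarrow> ('a \<Rightarrow> 'b::real_normed_vector) \<Rightarrow> 'a \<Rightarrow> 'b" where
  "pd v g = (\<lambda>x. frechet_derivative g (at x) v)"

definition smooth_on :: "'a::euclidean_space set \<Rightarrow> ('a \<Rightarrow> 'b::real_normed_vector) \<Rightarrow> bool" where
  "smooth_on S g \<longleftrightarrow> (\<forall>vs. set vs \<subseteq> Basis \<longrightarrow> foldr pd vs g differentiable_on S)"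

definition slit_TM :: "(real^('n::finite)) set \<Rightarrow> ('n::finite) tp set" where
  "slit_TM X = X \<times> (UNIV - {0})"

text \<open>Spray S = y^i d/dx^i + f^i d/dy^i on the slit tangent bundle, f smooth and
  positively homogeneous of degree 2 in y.\<close>
definition is_spray :: "(real^('n::finite)) set \<Rightarrow> (('n::finite) tp \<Rightarrow> real^'n) \<Rightarrow> bool" where
  "is_spray X f \<longleftrightarrow> open X \<and> smooth_on (slit_TM X) f \<and>
     (\<forall>x\<in>X. \<forall>y. y \<noteq> 0 \<longrightarrow> (\<forall>c>0. f (x, c *\<^sub>R y) = c\<^sup>2 *\<^sub>R f (x, y)))"

text \<open>h_i = d/dx^i - Gamma^a_i d/dy^a with Gamma^a_i = -1/2 df^a/dy^i.\<close>
definition hfield :: "(('n::finite) tp \<Rightarrow> real^'n) \<Rightarrow> 'n \<Rightarrow> ('n::finite) tp \<Rightarrow> ('n::finite) tp" where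
  "hfield f i u = (axis i 1, (1/2) *\<^sub>R frechet_derivative f (at u) (0, axis i 1))"

definition liouville :: "('n::finite) tp \<Rightarrow> ('n::finite) tp" where
  "liouville u = (0, snd u)"

definition horizontal_field :: "(real^('n::finite)) set \<Rightarrow> (('n::finite) tp \<Rightarrow> real^'n) \<Rightarrow> ('n::finite) tp set \<Rightarrow> (('n::finite) tp \<Rightarrow> ('n::finite) tp) \<Rightarrow> bool" where
  "horizontal_field X f V Z \<longleftrightarrow> open V \<and> V \<subseteq> slit_TM X \<and>
     (\<exists>a :: 'n \<Rightarrow> ('n::finite) tp \<Rightarrow> real. (\<forall>i. smooth_on V (a i)) \<and>
        (\<forall>u\<in>V. Z u = (\<Sum>i\<in>UNIV. a i u *\<^sub>R hfield f i u)))"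

definition lie_bracket :: "('a::real_normed_vector \<Rightarrow> 'a) \<Rightarrow> ('a \<Rightarrow> 'a) \<Rightarrow> 'a \<Rightarrow> 'a" where
  "lie_bracket Z Y u = frechet_derivative Y (at u) (Z u) - frechet_derivative Z (at u) (Y u)"

inductive_set hol_fields :: "(real^('n::finite)) set \<Rightarrow> (('n::finite) tp \<Rightarrow> real^'n) \<Rightarrow> (('n::finite) tp set \<times> (('n::finite) tp \<Rightarrow> ('n::finite) tp)) set"
  for X f where
  base: "horizontal_field X f V Z \<Longrightarrow> (V, Z) \<in> hol_fields X f"
| bracket: "(V, Z) \<in> hol_fields X f \<Longrightarrow> (W, Y) \<in> hol_fields X f \<Longrightarrow>
            (V \<inter> W, lie_bracket Z Y) \<in> hol_fields X f"

definition holonomy :: "(real^('n::finite)) set \<Rightarrow> (('n::finite) tp \<Rightarrow> real^'n) \<Rightarrow> ('n::finite) tp \<Rightarrow> ('n::finite) tp set" where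
  "holonomy X f u = span {Z u | V Z. (V, Z) \<in> hol_fields X f \<and> u \<in> V}"

text \<open>The operator P^2_F E = (L_C E - 2E, P_h E). The first component is a
  function; the second is the 1-form X |-> (h X)(E), represented by its
  values on (constant) vectors v.\<close>
definition LC_minus_2 :: "(('n::finite) tp \<Rightarrow> real) \<Rightarrow> ('n::finite) tp \<Rightarrow> real" where
  "LC_minus_2 E u = frechet_derivative E (at u) (liouville u) - 2 * E u"

definition P_h :: "(('n::finite) tp \<Rightarrow> ('n::finite) tp \<Rightarrow> ('n::finite) tp) \<Rightarrow> (('n::finite) tp \<Rightarrow> real) \<Rightarrow> ('n::finite) tp \<Rightarrow> ('n::finite) tp \<Rightarrow> real" where
  "P_h hh E v u = frechet_derivative E (at u) (hh u v)"

text \<open>E represents a 1-jet in R_{1,u}(P^2_F): (P^2_F E)(u) = 0.\<close>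
definition first_order_sol :: "('n::finite) tp set \<Rightarrow> (('n::finite) tp \<Rightarrow> ('n::finite) tp \<Rightarrow> ('n::finite) tp) \<Rightarrow> ('n::finite) tp \<Rightarrow> (('n::finite) tp \<Rightarrow> real) \<Rightarrow> bool" where
  "first_order_sol U hh u E \<longleftrightarrow> smooth_on U E \<and>
     LC_minus_2 E u = 0 \<and> (\<forall>v. P_h hh E v u = 0)"

text \<open>E represents a 2-jet in R_{2,u}(P^2_F): P^2_F E and its first derivatives vanish at u.\<close>
definition second_order_sol :: "('n::finite) tp set \<Rightarrow> (('n::finite) tp \<Rightarrow> ('n::finite) tp \<Rightarrow> ('n::finite) tp) \<Rightarrow> ('n::finite) tp \<Rightarrow> (('n::finite) tp \<Rightarrow> real) \<Rightarrow> bool" where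
  "second_order_sol U hh u E \<longleftrightarrow> first_order_sol U hh u E \<and>
     frechet_derivative (LC_minus_2 E) (at u) = (\<lambda>_. 0) \<and>
     (\<forall>v. frechet_derivative (P_h hh E v) (at u) = (\<lambda>_. 0))"

end

theory Submission
  imports Defs
begin

text \<open>
  With L = dE(u), a 2-jet over the 1-jet of E is represented by
  E2(p) = E(u) + L(p - u) + Q(p - u, p - u)/2 for a symmetric bilinear form Q.
  Differentiating the two equations once more at u prescribes Q on the vectors
  of W = R C_u + H_u: Q(w, C_u) = 2 L w - L(C w) and Q(w, h) = - L(A(w, h)) for
  h in H_u, where A(w, .) is the derivative of the projector field hh at u in
  direction w. Since C_u is not in H_u these prescriptions are independent, and
  they extend to a symmetric form on the whole space as soon as they are
  symmetric on W x W. Symmetry on H_u x H_u holds because L kills the Lie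
  brackets of holonomy fields, and the mixed condition L(A(C_u, h)) = L(C h)
  holds because the holonomy distribution is invariant under the dilations of
  the fibres, by homogeneity of the spray.
\<close>

section \<open>Symmetric bilinear forms with prescribed values\<close>

lemma linear_projection_exists:
  assumes "subspace W"
  obtains \<pi> :: "'a::real_vector \<Rightarrow> 'a" where "linear \<pi>" "\<And>x. \<pi> x \<in> W" "\<And>k. k \<in> W \<Longrightarrow> \<pi> k = k"
  using linear_exists_left_inverse_on[OF linear_id assms] by (auto simp: image_subset_iff)

lemma symmetric_bilinear_extension:
  fixes B :: "'a::real_vector \<Rightarrow> 'a \<Rightarrow> real"
  assumes B: "bilinear B" and W: "subspace W" and sym: "\<And>k k'. k \<in> W \<Longrightarrow> k' \<in> W \<Longrightarrow> B k k' = B k' k"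
  obtains Q where "bilinear Q" "\<And>x y. Q x y = Q y x" "\<And>x k. k \<in> W \<Longrightarrow> Q x k = B x k"
proof -
  obtain \<pi> :: "'a \<Rightarrow> 'a" where lin: "linear \<pi>" and into: "\<And>x. \<pi> x \<in> W" and id: "\<And>k. k \<in> W \<Longrightarrow> \<pi> k = k"
    using linear_projection_exists[OF W] by blast
  define Q where "Q x y = B x (\<pi> y) + B y (\<pi> x) - B (\<pi> x) (\<pi> y)" for x y
  have "bilinear Q"
    using B lin unfolding Q_def bilinear_def linear_iff by (simp add: algebra_simps)
  moreover have "Q x y = Q y x" for x y
    unfolding Q_def using sym[OF into into] by simp
  moreover have "Q x k = B x k" if "k \<in> W" for x k
    unfolding Q_def id[OF that] using sym[OF that into] by simp
  ultimately show thesis by (rule that)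
qed

lemma linear_functional_separating:
  fixes c :: "'a::euclidean_space"
  assumes "subspace H" "c \<notin> H"
  obtains \<mu> :: "'a \<Rightarrow> real" where "linear \<mu>" "\<mu> c = 1" "\<And>h. h \<in> H \<Longrightarrow> \<mu> h = 0"
proof -
  obtain y z where y: "y \<in> span H" and z: "\<And>w. w \<in> span H \<Longrightarrow> orthogonal z w" and c: "c = y + z"
    using orthogonal_subspace_decomp_exists by blast
  have "z \<noteq> 0" using assms y c by (metis add.right_neutral span_eq_iff)
  define \<mu> where "\<mu> x = (x \<bullet> z) / (z \<bullet> z)" for x
  have "linear \<mu>"
    unfolding \<mu>_def by (rule linearI) (simp_all add: inner_add_left add_divide_distrib)
  moreover have "\<mu> c = 1"
    using z[OF y] \<open>z \<noteq> 0\<close> unfolding \<mu>_def c orthogonal_def by (simp add: inner_add_left inner_add_right inner_commute)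
  moreover have "\<mu> h = 0" if "h \<in> H" for h
    using z[of h] that span_base unfolding \<mu>_def orthogonal_def by (fastforce simp: inner_commute)
  ultimately show thesis by (rule that)
qed

lemma span_insert_decomposition:
  assumes H: "subspace H" and \<mu>: "linear \<mu>" "\<mu> c = 1" "\<And>h. h \<in> H \<Longrightarrow> \<mu> h = 0"
    and k: "k \<in> span (insert c H)"
  shows "k - \<mu> k *\<^sub>R c \<in> H"
proof -
  obtain t where t: "k - t *\<^sub>R c \<in> H"
    using k unfolding span_insert span_eq_iff[THEN iffD2, OF H] by blast
  have "\<mu> k - t = \<mu> (k - t *\<^sub>R c)"
    using \<mu>(1,2) by (simp add: linear_diff linear_scale)
  then have "\<mu> k = t"
    using \<mu>(3)[OF t] by simp
  with t show ?thesis by simp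
qed

lemma symmetric_bilinear_prescribed:
  fixes \<beta> :: "'a::euclidean_space \<Rightarrow> 'a \<Rightarrow> real"
  assumes H: "subspace H" and c: "c \<notin> H" and \<gamma>: "linear \<gamma>" and \<beta>: "bilinear \<beta>"
    and sym: "\<And>h h'. h \<in> H \<Longrightarrow> h' \<in> H \<Longrightarrow> \<beta> h h' = \<beta> h' h"
    and compat: "\<And>h. h \<in> H \<Longrightarrow> \<beta> c h = \<gamma> h"
  obtains Q where "bilinear Q" "\<And>x y. Q x y = Q y x"
    "\<And>x. Q x c = \<gamma> x" "\<And>x h. h \<in> H \<Longrightarrow> Q x h = \<beta> x h"
proof -
  obtain \<mu> :: "'a \<Rightarrow> real" where \<mu>: "linear \<mu>" "\<mu> c = 1" "\<And>h. h \<in> H \<Longrightarrow> \<mu> h = 0"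
    using linear_functional_separating[OF H c] by blast
  \<comment> \<open>Along W = R c + H, split k as \<mu> k c + (k - \<mu> k c).\<close>
  define B where "B x k = \<mu> k * \<gamma> x + \<beta> x (k - \<mu> k *\<^sub>R c)" for x k
  define W where "W = span (insert c H)"
  have W_split: "k - \<mu> k *\<^sub>R c \<in> H" if "k \<in> W" for k
    using that unfolding W_def by (intro span_insert_decomposition[OF H \<mu>(1,2)] \<mu>(3))
  have B_expand: "B x k = \<mu> k * \<gamma> x + \<beta> x k - \<mu> k * \<beta> x c" for x k
    unfolding B_def using \<beta> by (simp add: bilinear_rsub bilinear_rmul)
  have bil: "bilinear B"
    using \<mu>(1) \<gamma> \<beta> unfolding B_expand[abs_def] bilinear_def linear_iff
    by (simp add: algebra_simps)
  have B_sym: "B k k' = B k' k" if "k \<in> W" "k' \<in> W" for k k'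
  proof -
    define h h' where "h = k - \<mu> k *\<^sub>R c" and "h' = k' - \<mu> k' *\<^sub>R c"
    have H_parts: "h \<in> H" "h' \<in> H"
      unfolding h_def h'_def using W_split that by auto
    have k: "k = \<mu> k *\<^sub>R c + h" and k': "k' = \<mu> k' *\<^sub>R c + h'"
      unfolding h_def h'_def by simp_all
    have "\<gamma> k = \<mu> k * \<gamma> c + \<gamma> h" "\<gamma> k' = \<mu> k' * \<gamma> c + \<gamma> h'"
      by (subst k, simp add: linear_add[OF \<gamma>] linear_scale[OF \<gamma>])
         (subst k', simp add: linear_add[OF \<gamma>] linear_scale[OF \<gamma>])
    moreover have "\<beta> k h' = \<mu> k * \<gamma> h' + \<beta> h h'" "\<beta> k' h = \<mu> k' * \<gamma> h + \<beta> h' h"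
      by (subst k, simp add: bilinear_ladd[OF \<beta>] bilinear_lmul[OF \<beta>] compat H_parts)
         (subst k', simp add: bilinear_ladd[OF \<beta>] bilinear_lmul[OF \<beta>] compat H_parts)
    ultimately show ?thesis
      unfolding B_def h_def[symmetric] h'_def[symmetric] using sym[OF H_parts]
      by (simp add: algebra_simps)
  qed
  have W: "subspace W"
    unfolding W_def by (rule subspace_span)
  obtain Q where Q: "bilinear Q" "\<And>x y. Q x y = Q y x" "\<And>x k. k \<in> W \<Longrightarrow> Q x k = B x k"
    using symmetric_bilinear_extension[OF bil W B_sym] by blast
  show thesis
  proof (rule that[OF Q(1,2)])
    show "Q x c = \<gamma> x" for x
      using Q(3)[of c x] \<mu>(2) unfolding W_def B_def by (simp add: span_base bilinear_rzero[OF \<beta>])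
    show "Q x h = \<beta> x h" if "h \<in> H" for x h
      using Q(3)[of h x] \<mu>(3)[OF that] that unfolding W_def B_def by (simp add: span_base bilinear_rzero[OF \<beta>])
  qed
qed

section \<open>Finite-order smoothness\<close>

lemma has_frechet_derivative_on:
  "g differentiable_on S \<Longrightarrow> open S \<Longrightarrow> x \<in> S \<Longrightarrow> (g has_derivative frechet_derivative g (at x)) (at x)"
  using differentiable_on_eq_differentiable_at frechet_derivative_works by blast

lemma differentiable_on_cong_open:
  assumes "open S" "\<And>x. x \<in> S \<Longrightarrow> g x = g' x" "g differentiable_on S"
  shows "g' differentiable_on S"
  unfolding differentiable_on_eq_differentiable_at[OF assms(1)]
proof
  fix x assume x: "x \<in> S"
  have "(g' has_derivative frechet_derivative g (at x)) (at x)"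
    using has_derivative_transform_within_open[OF has_frechet_derivative_on[OF assms(3,1) x] assms(1) x] assms(2)
    by blast
  then show "g' differentiable at x" unfolding differentiable_def by blast
qed

lemma linear_Basis_expansion:
  fixes D :: "'a::euclidean_space \<Rightarrow> 'b::real_vector"
  assumes "linear D"
  shows "D v = (\<Sum>b\<in>Basis. (v \<bullet> b) *\<^sub>R D b)"
proof -
  have "D v = D (\<Sum>b\<in>Basis. (v \<bullet> b) *\<^sub>R b)" by (simp add: euclidean_representation)
  also have "\<dots> = (\<Sum>b\<in>Basis. (v \<bullet> b) *\<^sub>R D b)"
    by (simp add: linear_sum[OF assms] linear_scale[OF assms] o_def)
  finally show ?thesis .
qed

lemma open_vimage_bounded_linear: "open S \<Longrightarrow> bounded_linear d \<Longrightarrow> open (d -` S)"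
  by (simp add: continuous_open_vimage linear_continuous_at)

text \<open>Unlike \<^const>\<open>smooth_on\<close>, smoothness up to a fixed order admits induction on the order.\<close>

definition smooth_upto :: "nat \<Rightarrow> 'a::euclidean_space set \<Rightarrow> ('a \<Rightarrow> 'b::real_normed_vector) \<Rightarrow> bool" where
  "smooth_upto n S g \<longleftrightarrow> (\<forall>vs. set vs \<subseteq> Basis \<and> length vs \<le> n \<longrightarrow> foldr pd vs g differentiable_on S)"

lemma smooth_on_iff_smooth_upto: "smooth_on S g \<longleftrightarrow> (\<forall>n. smooth_upto n S g)"
  unfolding smooth_on_def smooth_upto_def by (meson le_refl)

lemma smooth_upto_0: "smooth_upto 0 S g \<longleftrightarrow> g differentiable_on S"
  unfolding smooth_upto_def by auto

lemma smooth_upto_Suc: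
  "smooth_upto (Suc n) S g \<longleftrightarrow> g differentiable_on S \<and> (\<forall>b\<in>Basis. smooth_upto n S (pd b g))"
proof
  assume g: "smooth_upto (Suc n) S g"
  have "foldr pd vs (pd b g) differentiable_on S"
    if "b \<in> Basis" "set vs \<subseteq> Basis" "length vs \<le> n" for b vs
    using g[unfolded smooth_upto_def, rule_format, of "vs @ [b]"] that by simp
  then show "g differentiable_on S \<and> (\<forall>b\<in>Basis. smooth_upto n S (pd b g))"
    using g[unfolded smooth_upto_def, rule_format, of "[]"] unfolding smooth_upto_def by simp
next
  assume g: "g differentiable_on S \<and> (\<forall>b\<in>Basis. smooth_upto n S (pd b g))"
  show "smooth_upto (Suc n) S g"
    unfolding smooth_upto_def
  proof (intro allI impI)
    fix vs :: "'a list" assume vs: "set vs \<subseteq> Basis \<and> length vs \<le> Suc n"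
    show "foldr pd vs g differentiable_on S"
    proof (cases vs rule: rev_cases)
      case Nil then show ?thesis using g by simp
    next
      case (snoc ws b) then show ?thesis using g vs unfolding smooth_upto_def by auto
    qed
  qed
qed

lemma smooth_on_differentiable_on: "smooth_on S g \<Longrightarrow> g differentiable_on S"
  using smooth_on_iff_smooth_upto smooth_upto_0 by blast

lemma smooth_upto_mono: "smooth_upto n S g \<Longrightarrow> m \<le> n \<Longrightarrow> smooth_upto m S g"
  unfolding smooth_upto_def by auto

lemma smooth_upto_subset: "smooth_upto n S g \<Longrightarrow> T \<subseteq> S \<Longrightarrow> smooth_upto n T g"
  unfolding smooth_upto_def using differentiable_on_subset by blast

lemma smooth_upto_cong:
  assumes "open S" "\<And>x. x \<in> S \<Longrightarrow> g x = g' x" "smooth_upto n S g"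
  shows "smooth_upto n S g'"
  using assms(2,3)
proof (induction n arbitrary: g g')
  case 0
  then show ?case unfolding smooth_upto_0 using differentiable_on_cong_open assms(1) by blast
next
  case (Suc n)
  have g: "g differentiable_on S" using Suc.prems unfolding smooth_upto_Suc by blast
  have "smooth_upto n S (pd b g')" if b: "b \<in> Basis" for b
  proof -
    have "pd b g x = pd b g' x" if x: "x \<in> S" for x
    proof -
      have "g differentiable at x"
        using g x differentiable_on_eq_differentiable_at[OF assms(1)] by blast
      then show ?thesis
        unfolding pd_def using frechet_derivative_transform_within_open[OF _ assms(1) x Suc.prems(1)] by simp
    qed
    moreover have "smooth_upto n S (pd b g)"
      using Suc.prems(2) b unfolding smooth_upto_Suc by blast
    ultimately show ?thesis by (rule Suc.IH)
  qed
  moreover have "g' differentiable_on S"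
    by (rule differentiable_on_cong_open[OF assms(1) Suc.prems(1) g])
  ultimately show ?case unfolding smooth_upto_Suc by blast
qed

lemma smooth_upto_const: "smooth_upto n S (\<lambda>x. c)"
proof (induction n arbitrary: c)
  case 0 then show ?case unfolding smooth_upto_0 by simp
next
  case (Suc n)
  have "pd b (\<lambda>x. c) = (\<lambda>x. 0)" for b :: 'a unfolding pd_def by simp
  then show ?case unfolding smooth_upto_Suc using Suc.IH[of 0] by simp
qed

lemma smooth_upto_ident: "smooth_upto n S (\<lambda>x. x)"
proof (cases n)
  case 0 then show ?thesis by (simp add: smooth_upto_0)
next
  case (Suc m)
  have pd_ident: "pd b (\<lambda>x. x) = (\<lambda>x. b)" for b unfolding pd_def by simp
  show ?thesis unfolding Suc smooth_upto_Suc pd_ident by (simp add: smooth_upto_const)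
qed

lemma smooth_upto_add:
  assumes "open S"
  shows "smooth_upto n S g \<Longrightarrow> smooth_upto n S h \<Longrightarrow> smooth_upto n S (\<lambda>x. g x + h x)"
proof (induction n arbitrary: g h)
  case 0 then show ?case unfolding smooth_upto_0 by (simp add: differentiable_on_add)
next
  case (Suc n)
  have dg: "g differentiable_on S" and dh: "h differentiable_on S"
    using Suc.prems smooth_upto_Suc by blast+
  have "smooth_upto n S (pd b (\<lambda>x. g x + h x))" if b: "b \<in> Basis" for b
  proof (rule smooth_upto_cong[OF assms])
    show "pd b g x + pd b h x = pd b (\<lambda>x. g x + h x) x" if "x \<in> S" for x
      unfolding pd_def using fun_cong[OF frechet_derivative_at[OF has_derivative_add[OF
          has_frechet_derivative_on[OF dg assms that] has_frechet_derivative_on[OF dh assms that]]], of b]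
      by simp
    show "smooth_upto n S (\<lambda>x. pd b g x + pd b h x)"
      using Suc b unfolding smooth_upto_Suc by blast
  qed
  then show ?case unfolding smooth_upto_Suc using dg dh by simp
qed

lemma smooth_upto_linear:
  assumes "open S" "bounded_linear T"
  shows "smooth_upto n S g \<Longrightarrow> smooth_upto n S (\<lambda>x. T (g x))"
proof (induction n arbitrary: g)
  case 0
  then show ?case
    unfolding smooth_upto_0 using differentiable_on_compose bounded_linear_imp_differentiable_on assms(2)
    by blast
next
  case (Suc n)
  have dg: "g differentiable_on S" using Suc.prems smooth_upto_Suc by blast
  have "smooth_upto n S (pd b (\<lambda>x. T (g x)))" if b: "b \<in> Basis" for b
  proof (rule smooth_upto_cong[OF assms(1)])
    show "T (pd b g x) = pd b (\<lambda>x. T (g x)) x" if "x \<in> S" for x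
      unfolding pd_def using fun_cong[OF frechet_derivative_at[OF
          bounded_linear.has_derivative[OF assms(2) has_frechet_derivative_on[OF dg assms(1) that]]], of b]
      by simp
    show "smooth_upto n S (\<lambda>x. T (pd b g x))"
      using Suc b unfolding smooth_upto_Suc by blast
  qed
  then show ?case
    unfolding smooth_upto_Suc
    using dg differentiable_on_compose bounded_linear_imp_differentiable_on assms(2) by blast
qed

lemma smooth_upto_diff:
  assumes "open S" "smooth_upto n S g" "smooth_upto n S h"
  shows "smooth_upto n S (\<lambda>x. g x - h x)"
  using smooth_upto_add[OF assms(1,2) smooth_upto_linear[OF assms(1) bounded_linear_minus[OF bounded_linear_ident] assms(3)]]
  by simp

lemma smooth_upto_bilinear:
  assumes "open S" "bounded_bilinear P"
  shows "smooth_upto n S g \<Longrightarrow> smooth_upto n S h \<Longrightarrow> smooth_upto n S (\<lambda>x. P (g x) (h x))"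
proof (induction n arbitrary: g h)
  case 0
  have "(\<lambda>x. P (g x) (h x)) differentiable at x" if "x \<in> S" for x
    using bounded_bilinear.FDERIV[OF assms(2) has_frechet_derivative_on[OF _ assms(1) that]
        has_frechet_derivative_on[OF _ assms(1) that]] 0
    unfolding smooth_upto_0 differentiable_def by blast
  then show ?case unfolding smooth_upto_0 differentiable_on_eq_differentiable_at[OF assms(1)] by blast
next
  case (Suc n)
  have dg: "g differentiable_on S" and dh: "h differentiable_on S"
    using Suc.prems smooth_upto_Suc by blast+
  have deriv: "((\<lambda>x. P (g x) (h x)) has_derivative
      (\<lambda>v. P (g x) (frechet_derivative h (at x) v) + P (frechet_derivative g (at x) v) (h x))) (at x)"
    if "x \<in> S" for x
    using bounded_bilinear.FDERIV[OF assms(2) has_frechet_derivative_on[OF dg assms(1) that]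
        has_frechet_derivative_on[OF dh assms(1) that]] .
  have gn: "smooth_upto n S g" and hn: "smooth_upto n S h"
    using Suc.prems smooth_upto_mono le_SucI order_refl by blast+
  have "smooth_upto n S (pd b (\<lambda>x. P (g x) (h x)))" if b: "b \<in> Basis" for b
  proof (rule smooth_upto_cong[OF assms(1)])
    show "P (g x) (pd b h x) + P (pd b g x) (h x) = pd b (\<lambda>x. P (g x) (h x)) x" if "x \<in> S" for x
      unfolding pd_def using fun_cong[OF frechet_derivative_at[OF deriv[OF that]], of b] by simp
    have "smooth_upto n S (pd b g)" "smooth_upto n S (pd b h)"
      using Suc.prems b unfolding smooth_upto_Suc by blast+
    then show "smooth_upto n S (\<lambda>x. P (g x) (pd b h x) + P (pd b g x) (h x))"
      by (intro smooth_upto_add[OF assms(1)] Suc.IH gn hn)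
  qed
  moreover have "(\<lambda>x. P (g x) (h x)) differentiable_on S"
    using deriv differentiable_on_eq_differentiable_at[OF assms(1)] unfolding differentiable_def by blast
  ultimately show ?case unfolding smooth_upto_Suc by simp
qed

lemma smooth_upto_sum:
  assumes "open S" "finite I" "\<And>i. i \<in> I \<Longrightarrow> smooth_upto n S (g i)"
  shows "smooth_upto n S (\<lambda>x. \<Sum>i\<in>I. g i x)"
  using assms(2,3)
  by (induction I rule: finite_induct) (simp_all add: smooth_upto_const smooth_upto_add[OF assms(1)])

lemma smooth_upto_compose_linear:
  fixes d :: "'c::euclidean_space \<Rightarrow> 'a::euclidean_space" and g :: "'a \<Rightarrow> 'b::real_normed_vector"
  assumes S: "open S" and d: "bounded_linear d"
  shows "smooth_upto n S g \<Longrightarrow> smooth_upto n (d -` S) (\<lambda>x. g (d x))"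
proof -
  have open_pre: "open (d -` S)"
    by (rule open_vimage_bounded_linear[OF S d])
  have chain: "((\<lambda>x. g (d x)) has_derivative (\<lambda>v. frechet_derivative g (at (d x)) (d v))) (at x)"
    if "g differentiable_on S" "x \<in> d -` S" for g :: "'a \<Rightarrow> 'b" and x
    using diff_chain_at[OF bounded_linear_imp_has_derivative[OF d] has_frechet_derivative_on[OF that(1) S]] that(2)
    by (simp add: o_def)
  have diff: "(\<lambda>x. g (d x)) differentiable_on (d -` S)" if "g differentiable_on S" for g :: "'a \<Rightarrow> 'b"
    unfolding differentiable_on_eq_differentiable_at[OF open_pre] differentiable_def
    using chain[OF that] by blast
  show "smooth_upto n S g \<Longrightarrow> smooth_upto n (d -` S) (\<lambda>x. g (d x))"
  proof (induction n arbitrary: g)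
    case 0
    then show ?case unfolding smooth_upto_0 by (rule diff)
  next
    case (Suc n)
    have dg: "g differentiable_on S" using Suc.prems smooth_upto_Suc by blast
    have "smooth_upto n (d -` S) (pd b (\<lambda>x. g (d x)))" if b: "b \<in> Basis" for b
    proof (rule smooth_upto_cong[OF open_pre])
      show "(\<Sum>b'\<in>Basis. (d b \<bullet> b') *\<^sub>R pd b' g (d x)) = pd b (\<lambda>x. g (d x)) x"
        if x: "x \<in> d -` S" for x
      proof -
        have "pd b (\<lambda>x. g (d x)) x = frechet_derivative g (at (d x)) (d b)"
          unfolding pd_def using fun_cong[OF frechet_derivative_at[OF chain[OF dg x]], of b] by simp
        also have "\<dots> = (\<Sum>b'\<in>Basis. (d b \<bullet> b') *\<^sub>R pd b' g (d x))"
          unfolding pd_def using x S dg differentiable_on_eq_differentiable_at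
          by (intro linear_Basis_expansion linear_frechet_derivative) auto
        finally show ?thesis by simp
      qed
      have "smooth_upto n S (pd b' g)" if "b' \<in> Basis" for b'
        using Suc.prems that unfolding smooth_upto_Suc by blast
      then show "smooth_upto n (d -` S) (\<lambda>x. \<Sum>b'\<in>Basis. (d b \<bullet> b') *\<^sub>R pd b' g (d x))"
        by (intro smooth_upto_sum[OF open_pre] smooth_upto_linear[OF open_pre bounded_linear_scaleR_right] Suc.IH)
           simp_all
    qed
    then show ?case unfolding smooth_upto_Suc using diff[OF dg] by simp
  qed
qed

section \<open>Quadratic functions and families of linear maps\<close>

lemma has_derivative_quadratic:
  fixes Q :: "'a::real_normed_vector \<Rightarrow> 'a \<Rightarrow> real"
  assumes Q: "bounded_bilinear Q" "\<And>x y. Q x y = Q y x" and L: "bounded_linear L"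
  shows "((\<lambda>p. c + L (p - u) + Q (p - u) (p - u) / 2) has_derivative (\<lambda>w. L w + Q (p - u) w)) (at p)"
proof -
  have shift: "((\<lambda>p. p - u) has_derivative (\<lambda>w. w)) (at p)"
    using has_derivative_diff[OF has_derivative_ident has_derivative_const[of u]] by simp
  have "((\<lambda>p. c + L (p - u) + Q (p - u) (p - u) / 2) has_derivative
      (\<lambda>w. 0 + L w + (Q (p - u) w + Q w (p - u)) / 2)) (at p)"
    by (intro has_derivative_add has_derivative_const bounded_linear.has_derivative[OF bounded_linear_divide]
        bounded_linear.has_derivative[OF L shift] bounded_bilinear.FDERIV[OF Q(1) shift shift])
  moreover have "Q w (p - u) = Q (p - u) w" for w by (rule Q(2))
  ultimately show ?thesis by simp
qed

lemma has_derivative_bilinear_centred: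
  assumes Q: "bounded_bilinear Q" and Y: "(Y has_derivative DY) (at u)"
  shows "((\<lambda>p. Q (p - u) (Y p)) has_derivative (\<lambda>w. Q w (Y u))) (at u)"
proof -
  have shift: "((\<lambda>p. p - u) has_derivative (\<lambda>w. w)) (at u)"
    using has_derivative_diff[OF has_derivative_ident has_derivative_const[of u]] by simp
  from bounded_bilinear.FDERIV[OF Q shift Y] show ?thesis
    by (simp add: bounded_bilinear.zero_left[OF Q])
qed

lemma smooth_on_quadratic:
  fixes Q :: "'a::euclidean_space \<Rightarrow> 'a \<Rightarrow> real"
  assumes S: "open S" and Q: "bounded_bilinear Q" and L: "bounded_linear L"
  shows "smooth_on S (\<lambda>p. c + L (p - u) + Q (p - u) (p - u) / 2)"
  unfolding smooth_on_iff_smooth_upto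
proof
  fix n
  have shift: "smooth_upto n S (\<lambda>p. p - u)"
    by (rule smooth_upto_diff[OF S smooth_upto_ident smooth_upto_const])
  show "smooth_upto n S (\<lambda>p. c + L (p - u) + Q (p - u) (p - u) / 2)"
    by (intro smooth_upto_add[OF S] smooth_upto_const smooth_upto_linear[OF S L shift]
        smooth_upto_linear[OF S bounded_linear_divide smooth_upto_bilinear[OF S Q shift shift]])
qed

text \<open>The derivative at u in direction w of p \<mapsto> P p v, written through the basis so that it is
  linear in v by construction.\<close>

definition family_deriv ::
    "('a::real_normed_vector \<Rightarrow> 'b::euclidean_space \<Rightarrow> 'c::real_normed_vector) \<Rightarrow> 'a \<Rightarrow> 'a \<Rightarrow> 'b \<Rightarrow> 'c" where
  "family_deriv P u w v = (\<Sum>b\<in>Basis. (v \<bullet> b) *\<^sub>R frechet_derivative (\<lambda>p. P p b) (at u) w)"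

lemma linear_family_deriv: "linear (family_deriv P u w)"
  by (rule linearI) (simp_all add: family_deriv_def inner_add_left scaleR_add_left sum.distrib scaleR_sum_right)

lemma linear_family_deriv_direction:
  assumes "\<And>b. b \<in> Basis \<Longrightarrow> (\<lambda>p. P p b) differentiable (at u)"
  shows "linear (\<lambda>w. family_deriv P u w v)"
proof -
  have "linear (\<lambda>w. (v \<bullet> b) *\<^sub>R frechet_derivative (\<lambda>p. P p b) (at u) w)" if "b \<in> Basis" for b
    by (rule linear_compose_scale_right[OF linear_frechet_derivative[OF assms[OF that]]])
  then show ?thesis
    unfolding family_deriv_def by (intro linear_compose_sum) auto
qed

lemma has_derivative_family_apply:
  assumes U: "open U" "u \<in> U" and lin: "\<And>p. p \<in> U \<Longrightarrow> linear (P p)"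
    and diff: "\<And>b. b \<in> Basis \<Longrightarrow> (\<lambda>p. P p b) differentiable (at u)"
    and Y: "(Y has_derivative DY) (at u)"
  shows "((\<lambda>p. P p (Y p)) has_derivative (\<lambda>w. P u (DY w) + family_deriv P u w (Y u))) (at u)"
proof (rule has_derivative_transform_within_open[OF _ U])
  have "((\<lambda>p. \<Sum>b\<in>Basis. (Y p \<bullet> b) *\<^sub>R P p b) has_derivative
      (\<lambda>w. \<Sum>b\<in>Basis. (Y u \<bullet> b) *\<^sub>R frechet_derivative (\<lambda>p. P p b) (at u) w + (DY w \<bullet> b) *\<^sub>R P u b)) (at u)"
    using diff by (intro has_derivative_sum has_derivative_scaleR
        bounded_linear.has_derivative[OF bounded_linear_inner_left Y] frechet_derivative_works[THEN iffD1]) auto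
  moreover have "(\<Sum>b\<in>Basis. (Y u \<bullet> b) *\<^sub>R frechet_derivative (\<lambda>p. P p b) (at u) w + (DY w \<bullet> b) *\<^sub>R P u b)
      = P u (DY w) + family_deriv P u w (Y u)" for w
    using linear_Basis_expansion[OF lin[OF U(2)], of "DY w"]
    by (simp add: family_deriv_def sum.distrib add.commute)
  ultimately show "((\<lambda>p. \<Sum>b\<in>Basis. (Y p \<bullet> b) *\<^sub>R P p b) has_derivative
      (\<lambda>w. P u (DY w) + family_deriv P u w (Y u))) (at u)"
    by simp
  show "(\<Sum>b\<in>Basis. (Y p \<bullet> b) *\<^sub>R P p b) = P p (Y p)" if "p \<in> U" for p
    using linear_Basis_expansion[OF lin[OF that], of "Y p"] by simp
qed

lemma section_derivative_modulo_range:
  assumes U: "open U" "u \<in> U" and lin: "\<And>p. p \<in> U \<Longrightarrow> linear (P p)"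
    and diff: "\<And>b. b \<in> Basis \<Longrightarrow> (\<lambda>p. P p b) differentiable (at u)"
    and L: "linear L" and L_range: "\<And>v. L (P u v) = (0::real)"
    and Y: "(Y has_derivative DY) (at u)"
    and N: "open N" "u \<in> N" "N \<subseteq> U" and fixed: "\<And>p. p \<in> N \<Longrightarrow> P p (Y p) = Y p"
  shows "L (DY w) = L (family_deriv P u w (Y u))"
proof -
  have "bounded_linear L" using L linear_conv_bounded_linear by blast
  then have "((\<lambda>p. L (Y p - P p (Y p))) has_derivative
      (\<lambda>w. L (DY w - (P u (DY w) + family_deriv P u w (Y u))))) (at u)"
    by (rule bounded_linear.has_derivative[OF _ has_derivative_diff[OF Y has_derivative_family_apply[OF U lin diff Y]]])
  moreover have "((\<lambda>p. L (Y p - P p (Y p))) has_derivative (\<lambda>w. 0)) (at u)"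
    by (rule has_derivative_transform_within_open[OF has_derivative_const N(1,2)])
       (simp add: fixed linear_0[OF L])
  ultimately have "L (DY w - (P u (DY w) + family_deriv P u w (Y u))) = 0"
    by (rule fun_cong[OF has_derivative_unique])
  then show ?thesis
    by (simp add: linear_diff[OF L] linear_add[OF L] L_range)
qed

section \<open>Holonomy fields of a spray\<close>

lemma open_slit_TM: "open X \<Longrightarrow> open (slit_TM X)"
  unfolding slit_TM_def by (intro open_Times) auto

lemma smooth_upto_hfield:
  fixes f :: "'a::finite tp \<Rightarrow> real^'a"
  assumes "is_spray X f"
  shows "smooth_upto n (slit_TM X) (hfield f i)"
proof -
  have S: "open (slit_TM X)" using assms open_slit_TM unfolding is_spray_def by blast
  have "smooth_upto (Suc n) (slit_TM X) f"
    using assms unfolding is_spray_def smooth_on_iff_smooth_upto by blast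
  moreover have "(0, axis i 1) \<in> (Basis :: 'a tp set)"
    by (auto simp: Basis_prod_def)
  ultimately have pd_f: "smooth_upto n (slit_TM X) (pd (0, axis i 1) f)"
    unfolding smooth_upto_Suc by blast
  have "smooth_upto n (slit_TM X) (\<lambda>u. (axis i 1, 0) + (0, (1/2::real) *\<^sub>R pd (0, axis i 1) f u))"
    by (intro smooth_upto_add[OF S smooth_upto_const smooth_upto_linear[OF S _ pd_f]] bounded_linear_Pair
        bounded_linear_zero bounded_linear_scaleR_right bounded_linear_ident)
  moreover have "hfield f i = (\<lambda>u. (axis i 1, 0) + (0, (1/2::real) *\<^sub>R pd (0, axis i 1) f u))"
    by (rule ext) (simp add: hfield_def pd_def)
  ultimately show ?thesis by simp
qed

lemma lie_bracket_Basis_expansion: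
  assumes "Z differentiable at u" "Y differentiable at u"
  shows "lie_bracket Z Y u = (\<Sum>b\<in>Basis. (Z u \<bullet> b) *\<^sub>R pd b Y u) - (\<Sum>b\<in>Basis. (Y u \<bullet> b) *\<^sub>R pd b Z u)"
  unfolding lie_bracket_def pd_def
  using linear_Basis_expansion[OF linear_frechet_derivative[OF assms(2)], of "Z u"]
    linear_Basis_expansion[OF linear_frechet_derivative[OF assms(1)], of "Y u"]
  by simp

lemma smooth_upto_lie_bracket:
  assumes S: "open S" and Z: "\<And>n. smooth_upto n S Z" and Y: "\<And>n. smooth_upto n S Y"
  shows "smooth_upto n S (lie_bracket Z Y)"
proof (rule smooth_upto_cong[OF S])
  have "Z differentiable_on S" "Y differentiable_on S"
    using Z Y smooth_upto_0 by blast+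
  then show "(\<Sum>b\<in>Basis. (Z u \<bullet> b) *\<^sub>R pd b Y u) - (\<Sum>b\<in>Basis. (Y u \<bullet> b) *\<^sub>R pd b Z u) = lie_bracket Z Y u"
    if "u \<in> S" for u
    using that S by (simp add: lie_bracket_Basis_expansion differentiable_on_eq_differentiable_at)
  have "smooth_upto n S (pd b Y)" "smooth_upto n S (pd b Z)" if "b \<in> Basis" for b
    using Y[of "Suc n"] Z[of "Suc n"] that unfolding smooth_upto_Suc by blast+
  then show "smooth_upto n S (\<lambda>u. (\<Sum>b\<in>Basis. (Z u \<bullet> b) *\<^sub>R pd b Y u) - (\<Sum>b\<in>Basis. (Y u \<bullet> b) *\<^sub>R pd b Z u))"
    by (intro smooth_upto_diff[OF S] smooth_upto_sum[OF S finite_Basis]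
        smooth_upto_bilinear[OF S bounded_bilinear_scaleR]
        smooth_upto_linear[OF S bounded_linear_inner_left Z] smooth_upto_linear[OF S bounded_linear_inner_left Y])
qed

lemma hol_fields_smooth:
  assumes spray: "is_spray X f"
  shows "(V, Z) \<in> hol_fields X f \<Longrightarrow> open V \<and> smooth_on V Z"
proof (induction rule: hol_fields.induct)
  case (base V Z)
  then obtain a where V: "open V" "V \<subseteq> slit_TM X" and a: "\<And>i. smooth_on V (a i)"
    and Z: "\<And>u. u \<in> V \<Longrightarrow> Z u = (\<Sum>i\<in>UNIV. a i u *\<^sub>R hfield f i u)"
    unfolding horizontal_field_def by blast
  have "smooth_upto n V (\<lambda>u. \<Sum>i\<in>UNIV. a i u *\<^sub>R hfield f i u)" for n
    using a smooth_upto_subset[OF smooth_upto_hfield[OF spray] V(2)]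
    unfolding smooth_on_iff_smooth_upto
    by (intro smooth_upto_sum[OF V(1)] smooth_upto_bilinear[OF V(1) bounded_bilinear_scaleR]) auto
  then have "smooth_upto n V Z" for n
    by (rule smooth_upto_cong[OF V(1), rotated]) (simp add: Z)
  then show ?case using V smooth_on_iff_smooth_upto by blast
next
  case (bracket V Z W Y)
  have VW: "open (V \<inter> W)"
    using bracket.IH by auto
  have "smooth_upto n (V \<inter> W) Z" "smooth_upto n (V \<inter> W) Y" for n
    using bracket.IH smooth_upto_subset unfolding smooth_on_iff_smooth_upto by blast+
  then show ?case
    using VW smooth_upto_lie_bracket[OF VW] unfolding smooth_on_iff_smooth_upto by blast
qed

definition fibre_scale :: "real \<Rightarrow> 'a \<times> 'b \<Rightarrow> 'a \<times> 'b::real_vector" where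
  "fibre_scale c p = (fst p, c *\<^sub>R snd p)"

lemma bounded_linear_fibre_scale:
  "bounded_linear (fibre_scale c :: 'a::real_normed_vector \<times> 'b::real_normed_vector \<Rightarrow> _)"
  unfolding fibre_scale_def[abs_def]
  by (intro bounded_linear_Pair bounded_linear_fst bounded_linear_compose[OF bounded_linear_scaleR_right bounded_linear_snd])

lemma fibre_scale_mult [simp]: "fibre_scale a (fibre_scale b p) = fibre_scale (a * b) p"
  unfolding fibre_scale_def by simp

lemma fibre_scale_1 [simp]: "fibre_scale 1 p = p"
  unfolding fibre_scale_def by simp

lemma fibre_scale_in_slit_TM_iff: "c > 0 \<Longrightarrow> fibre_scale c p \<in> slit_TM X \<longleftrightarrow> p \<in> slit_TM X"
  unfolding fibre_scale_def slit_TM_def by (cases p) auto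

lemma hfield_fibre_scale:
  assumes spray: "is_spray X f" and p: "p \<in> slit_TM X" and c: "c > 0"
  shows "hfield f i (fibre_scale c p) = fibre_scale c (hfield f i p)"
proof -
  have S: "open (slit_TM X)" and df: "f differentiable_on slit_TM X"
    using spray open_slit_TM smooth_on_differentiable_on unfolding is_spray_def by blast+
  have cp: "fibre_scale c p \<in> slit_TM X" using fibre_scale_in_slit_TM_iff c p by blast
  have "((\<lambda>q. f (fibre_scale c q)) has_derivative
      (\<lambda>v. frechet_derivative f (at (fibre_scale c p)) (fibre_scale c v))) (at p)"
    using diff_chain_at[OF bounded_linear_imp_has_derivative[OF bounded_linear_fibre_scale]
        has_frechet_derivative_on[OF df S cp]] by (simp add: o_def)
  moreover have "((\<lambda>q. f (fibre_scale c q)) has_derivative (\<lambda>v. c\<^sup>2 *\<^sub>R frechet_derivative f (at p) v)) (at p)"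
  proof (rule has_derivative_transform_within_open[OF _ S p])
    show "((\<lambda>q. c\<^sup>2 *\<^sub>R f q) has_derivative (\<lambda>v. c\<^sup>2 *\<^sub>R frechet_derivative f (at p) v)) (at p)"
      by (rule bounded_linear.has_derivative[OF bounded_linear_scaleR_right has_frechet_derivative_on[OF df S p]])
    show "c\<^sup>2 *\<^sub>R f q = f (fibre_scale c q)" if "q \<in> slit_TM X" for q
      using spray that c unfolding is_spray_def slit_TM_def fibre_scale_def by (cases q) auto
  qed
  ultimately have "(\<lambda>v. frechet_derivative f (at (fibre_scale c p)) (fibre_scale c v))
      = (\<lambda>v. c\<^sup>2 *\<^sub>R frechet_derivative f (at p) v)"
    by (rule has_derivative_unique)
  then have hom: "frechet_derivative f (at (fibre_scale c p)) (fibre_scale c v)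
      = c\<^sup>2 *\<^sub>R frechet_derivative f (at p) v" for v
    by (rule fun_cong)
  have "linear (frechet_derivative f (at (fibre_scale c p)))"
    using df S cp by (simp add: differentiable_on_eq_differentiable_at linear_frechet_derivative)
  then have "frechet_derivative f (at (fibre_scale c p)) (fibre_scale c (0, axis i 1))
      = c *\<^sub>R frechet_derivative f (at (fibre_scale c p)) (0, axis i 1)"
    unfolding fibre_scale_def by (simp add: linear_scale[symmetric])
  then have "c *\<^sub>R frechet_derivative f (at (fibre_scale c p)) (0, axis i 1)
      = c *\<^sub>R (c *\<^sub>R frechet_derivative f (at p) (0, axis i 1))"
    using hom[of "(0, axis i 1)"] by (simp add: power2_eq_square)
  then have "frechet_derivative f (at (fibre_scale c p)) (0, axis i 1) = c *\<^sub>R frechet_derivative f (at p) (0, axis i 1)"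
    using c scaleR_cancel_left by (metis order_less_irrefl)
  then show ?thesis unfolding hfield_def fibre_scale_def by simp
qed

lemma frechet_derivative_fibre_scale_conj:
  assumes V: "open V" and Y: "Y differentiable_on V" and p: "fibre_scale c p \<in> V"
    and Y': "\<forall>q\<in>fibre_scale c -` V. Y' q = fibre_scale (inverse c) (Y (fibre_scale c q))"
  shows "frechet_derivative Y' (at p)
    = (\<lambda>w. fibre_scale (inverse c) (frechet_derivative Y (at (fibre_scale c p)) (fibre_scale c w)))"
proof -
  have V': "open (fibre_scale c -` V)"
    by (rule open_vimage_bounded_linear[OF V bounded_linear_fibre_scale])
  have "((\<lambda>q. fibre_scale (inverse c) (Y (fibre_scale c q))) has_derivative
      (\<lambda>w. fibre_scale (inverse c) (frechet_derivative Y (at (fibre_scale c p)) (fibre_scale c w)))) (at p)"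
    using bounded_linear.has_derivative[OF bounded_linear_fibre_scale diff_chain_at[OF
          bounded_linear_imp_has_derivative[OF bounded_linear_fibre_scale] has_frechet_derivative_on[OF Y V p]]]
    by (simp add: o_def)
  then have "(Y' has_derivative
      (\<lambda>w. fibre_scale (inverse c) (frechet_derivative Y (at (fibre_scale c p)) (fibre_scale c w)))) (at p)"
    by (rule has_derivative_transform_within_open[OF _ V']) (use p Y' in auto)
  then show ?thesis by (rule frechet_derivative_at[symmetric])
qed

lemma lie_bracket_fibre_scale_conj:
  assumes c: "c \<noteq> 0" and V: "open V" "Z differentiable_on V" and W: "open W" "Y differentiable_on W"
    and Z': "\<forall>q\<in>fibre_scale c -` V. Z' q = fibre_scale (inverse c) (Z (fibre_scale c q))"
    and Y': "\<forall>q\<in>fibre_scale c -` W. Y' q = fibre_scale (inverse c) (Y (fibre_scale c q))"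
    and p: "fibre_scale c p \<in> V \<inter> W"
  shows "lie_bracket Z' Y' p = fibre_scale (inverse c) (lie_bracket Z Y (fibre_scale c p))"
proof -
  have pV: "fibre_scale c p \<in> V" and pW: "fibre_scale c p \<in> W" using p by auto
  show ?thesis
    unfolding lie_bracket_def frechet_derivative_fibre_scale_conj[OF V pV Z']
      frechet_derivative_fibre_scale_conj[OF W pW Y']
    using Z' Y' pV pW c
    by (simp add: linear_diff[OF bounded_linear.linear[OF bounded_linear_fibre_scale]])
qed

lemma horizontal_field_fibre_scale:
  assumes spray: "is_spray X f" and c: "c > 0" and Z: "horizontal_field X f V Z"
  obtains Z' where "horizontal_field X f (fibre_scale c -` V) Z'"
    "\<forall>p \<in> fibre_scale c -` V. Z' p = fibre_scale (inverse c) (Z (fibre_scale c p))"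
proof -
  obtain a where V: "open V" "V \<subseteq> slit_TM X" and a: "\<And>i. smooth_on V (a i)"
    and Z: "\<And>u. u \<in> V \<Longrightarrow> Z u = (\<Sum>i\<in>UNIV. a i u *\<^sub>R hfield f i u)"
    using Z unfolding horizontal_field_def by blast
  define Z' where "Z' p = (\<Sum>i\<in>UNIV. a i (fibre_scale c p) *\<^sub>R hfield f i p)" for p
  have "horizontal_field X f (fibre_scale c -` V) Z'"
    unfolding horizontal_field_def
  proof (intro conjI exI[of _ "\<lambda>i p. a i (fibre_scale c p)"])
    show "open (fibre_scale c -` V)" by (rule open_vimage_bounded_linear[OF V(1) bounded_linear_fibre_scale])
    show "fibre_scale c -` V \<subseteq> slit_TM X" using V(2) fibre_scale_in_slit_TM_iff[OF c] by blast
    show "\<forall>i. smooth_on (fibre_scale c -` V) (\<lambda>p. a i (fibre_scale c p))"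
      using smooth_upto_compose_linear[OF V(1) bounded_linear_fibre_scale] a
      unfolding smooth_on_iff_smooth_upto by blast
  qed (simp add: Z'_def)
  moreover have "Z' p = fibre_scale (inverse c) (Z (fibre_scale c p))" if p: "p \<in> fibre_scale c -` V" for p
  proof -
    have "p \<in> slit_TM X" using p V(2) fibre_scale_in_slit_TM_iff[OF c] by blast
    then have "Z (fibre_scale c p) = (\<Sum>i\<in>UNIV. a i (fibre_scale c p) *\<^sub>R fibre_scale c (hfield f i p))"
      using p Z hfield_fibre_scale[OF spray _ c] by simp
    also have "\<dots> = fibre_scale c (Z' p)"
      unfolding Z'_def
      by (simp add: linear_sum[OF bounded_linear.linear[OF bounded_linear_fibre_scale]]
          linear_scale[OF bounded_linear.linear[OF bounded_linear_fibre_scale]])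
    finally show ?thesis using c by simp
  qed
  ultimately show thesis using that[of Z'] by blast
qed

lemma hol_fields_fibre_scale:
  assumes spray: "is_spray X f" and c: "c > 0"
  shows "(V, Z) \<in> hol_fields X f \<Longrightarrow> \<exists>Z'. (fibre_scale c -` V, Z') \<in> hol_fields X f \<and>
           (\<forall>p \<in> fibre_scale c -` V. Z' p = fibre_scale (inverse c) (Z (fibre_scale c p)))"
proof (induction rule: hol_fields.induct)
  case (base V Z)
  then show ?case using horizontal_field_fibre_scale[OF spray c] hol_fields.base by metis
next
  case (bracket V Z W Y)
  obtain Z' where Z': "(fibre_scale c -` V, Z') \<in> hol_fields X f"
    "\<forall>p\<in>fibre_scale c -` V. Z' p = fibre_scale (inverse c) (Z (fibre_scale c p))"
    using bracket.IH(1) by blast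
  obtain Y' where Y': "(fibre_scale c -` W, Y') \<in> hol_fields X f"
    "\<forall>p\<in>fibre_scale c -` W. Y' p = fibre_scale (inverse c) (Y (fibre_scale c p))"
    using bracket.IH(2) by blast
  have V: "open V" "Z differentiable_on V" and W: "open W" "Y differentiable_on W"
    using hol_fields_smooth[OF spray bracket.hyps(1)] hol_fields_smooth[OF spray bracket.hyps(2)]
      smooth_on_differentiable_on by blast+
  have "(fibre_scale c -` (V \<inter> W), lie_bracket Z' Y') \<in> hol_fields X f"
    using hol_fields.bracket[OF Z'(1) Y'(1)] by (simp add: vimage_Int)
  then show ?case
    using lie_bracket_fibre_scale_conj[OF _ V W Z'(2) Y'(2)] c by auto
qed

lemma hol_fields_in_holonomy: "(V, Z) \<in> hol_fields X f \<Longrightarrow> u \<in> V \<Longrightarrow> Z u \<in> holonomy X f u"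
  unfolding holonomy_def by (rule span_base) blast

lemma bounded_linear_liouville: "bounded_linear liouville"
  unfolding liouville_def[abs_def] by (intro bounded_linear_Pair bounded_linear_zero bounded_linear_snd)

lemma frechet_derivative_liouville [simp]: "frechet_derivative liouville (at u) = liouville"
  by (rule frechet_derivative_at[symmetric], rule bounded_linear_imp_has_derivative[OF bounded_linear_liouville])

lemma holonomy_fibre_rescaled:
  assumes spray: "is_spray X f" and Z: "(V, Z) \<in> hol_fields X f" and c: "c > 0"
    and cu: "fibre_scale c u \<in> V"
  shows "(c *\<^sub>R fst (Z (fibre_scale c u)), snd (Z (fibre_scale c u))) \<in> holonomy X f u"
proof -
  obtain Z' where Z': "(fibre_scale c -` V, Z') \<in> hol_fields X f"
    "\<forall>p\<in>fibre_scale c -` V. Z' p = fibre_scale (inverse c) (Z (fibre_scale c p))"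
    using hol_fields_fibre_scale[OF spray c Z] by blast
  have "c *\<^sub>R Z' u \<in> holonomy X f u"
    using hol_fields_in_holonomy[OF Z'(1)] cu unfolding holonomy_def by (simp add: span_mul)
  moreover have "c *\<^sub>R Z' u = (c *\<^sub>R fst (Z (fibre_scale c u)), snd (Z (fibre_scale c u)))"
    using Z'(2) cu c by (simp add: fibre_scale_def)
  ultimately show ?thesis by simp
qed

lemma has_derivative_fibre_rescaled:
  fixes Z :: "'a::real_normed_vector \<times> 'b::real_normed_vector \<Rightarrow> 'c::real_normed_vector \<times> 'd::real_normed_vector"
  assumes Z: "(Z has_derivative DZ) (at u)"
  shows "((\<lambda>c. (c *\<^sub>R fst (Z (fibre_scale c u)), snd (Z (fibre_scale c u)))) has_derivative
      (\<lambda>t. (fst (DZ (0, t *\<^sub>R snd u)) + t *\<^sub>R fst (Z u), snd (DZ (0, t *\<^sub>R snd u))))) (at 1)"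
proof -
  have ray: "((\<lambda>c. fibre_scale c u) has_derivative (\<lambda>t. (0, t *\<^sub>R snd u))) (at 1)"
    unfolding fibre_scale_def
    by (rule has_derivative_Pair[OF has_derivative_const bounded_linear_imp_has_derivative[OF bounded_linear_scaleR_left]])
  have "(Z has_derivative DZ) (at (fibre_scale 1 u))"
    using Z by simp
  from diff_chain_at[OF ray this]
  have Z_ray: "((\<lambda>c. Z (fibre_scale c u)) has_derivative (\<lambda>t. DZ (0, t *\<^sub>R snd u))) (at 1)"
    by (simp add: o_def)
  show ?thesis
    using has_derivative_Pair[OF has_derivative_scaleR[OF has_derivative_ident has_derivative_fst[OF Z_ray]]
        has_derivative_snd[OF Z_ray]]
    by simp
qed

text \<open>By \<open>holonomy_fibre_rescaled\<close> the curve \<sigma> below stays in H_u for c near 1 and passes through Z u;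
  its velocity at c = 1 is [C, Z](u) + Z u.\<close>

lemma liouville_bracket_annihilated:
  assumes spray: "is_spray X f" and Z: "(V, Z) \<in> hol_fields X f" and u: "u \<in> V"
    and L: "linear L" and L_H: "\<And>h. h \<in> holonomy X f u \<Longrightarrow> L h = (0::real)"
  shows "L (lie_bracket liouville Z u) = 0"
proof -
  have V: "open V" and dZ: "Z differentiable_on V"
    using hol_fields_smooth[OF spray Z] smooth_on_differentiable_on by blast+
  have "bounded_linear L" using L linear_conv_bounded_linear by blast
  define DZ where "DZ = frechet_derivative Z (at u)"
  define \<sigma> where "\<sigma> c = (c *\<^sub>R fst (Z (fibre_scale c u)), snd (Z (fibre_scale c u)))" for c
  have deriv_\<sigma>: "((\<lambda>c. L (\<sigma> c)) has_derivative
      (\<lambda>t. L (fst (DZ (0, t *\<^sub>R snd u)) + t *\<^sub>R fst (Z u), snd (DZ (0, t *\<^sub>R snd u))))) (at 1)"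
    unfolding \<sigma>_def DZ_def
    by (rule bounded_linear.has_derivative[OF \<open>bounded_linear L\<close>
          has_derivative_fibre_rescaled[OF has_frechet_derivative_on[OF dZ V u]]])
  have const_\<sigma>: "((\<lambda>c. L (\<sigma> c)) has_derivative (\<lambda>t. 0)) (at 1)"
  proof (rule has_derivative_transform_within_open[OF has_derivative_const])
    let ?C = "{0<..} \<inter> (\<lambda>c. fibre_scale c u) -` V"
    show "open ?C"
      by (intro open_Int open_greaterThan continuous_open_vimage[OF V]) (simp add: fibre_scale_def continuous_intros)
    show "1 \<in> ?C" using u by simp
    show "0 = L (\<sigma> c)" if "c \<in> ?C" for c
      using that L_H holonomy_fibre_rescaled[OF spray Z] unfolding \<sigma>_def by simp
  qed
  have "L (fst (DZ (0, snd u)) + fst (Z u), snd (DZ (0, snd u))) = 0"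
    using fun_cong[OF has_derivative_unique[OF deriv_\<sigma> const_\<sigma>], of 1] by simp
  moreover have "(fst (DZ (0, snd u)) + fst (Z u), snd (DZ (0, snd u))) = DZ (liouville u) + Z u - liouville (Z u)"
    by (simp add: liouville_def prod_eq_iff)
  moreover have "L (Z u) = 0" using L_H hol_fields_in_holonomy[OF Z u] by blast
  ultimately show ?thesis
    unfolding lie_bracket_def DZ_def frechet_derivative_liouville
    by (simp add: linear_diff[OF L] linear_add[OF L])
qed

section \<open>Projectors onto the holonomy distribution\<close>

lemma has_derivative_LC_minus_2_quadratic:
  fixes L :: "'n::finite tp \<Rightarrow> real" and Q :: "'n tp \<Rightarrow> 'n tp \<Rightarrow> real"
  assumes Q: "bounded_bilinear Q" "\<And>x y. Q x y = Q y x" and L: "bounded_linear L"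
  shows "(LC_minus_2 (\<lambda>p. c + L (p - u) + Q (p - u) (p - u) / 2) has_derivative
           (\<lambda>w. L (liouville w) + Q w (liouville u) - 2 * L w)) (at u)"
proof -
  let ?E2 = "\<lambda>p. c + L (p - u) + Q (p - u) (p - u) / 2"
  have E2: "(?E2 has_derivative (\<lambda>w. L w + Q (p - u) w)) (at p)" for p
    by (rule has_derivative_quadratic[OF Q L])
  have "LC_minus_2 ?E2 = (\<lambda>p. L (liouville p) + Q (p - u) (liouville p) - 2 * ?E2 p)"
    by (rule ext) (simp add: LC_minus_2_def frechet_derivative_at[OF E2, symmetric])
  moreover have "((\<lambda>p. L (liouville p) + Q (p - u) (liouville p) - 2 * ?E2 p) has_derivative
      (\<lambda>w. L (liouville w) + Q w (liouville u) - 2 * (L w + Q (u - u) w))) (at u)"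
    by (intro has_derivative_diff has_derivative_add has_derivative_mult_right E2
        bounded_linear.has_derivative[OF L] bounded_linear_imp_has_derivative[OF bounded_linear_liouville]
        has_derivative_bilinear_centred[OF Q(1) bounded_linear_imp_has_derivative[OF bounded_linear_liouville]])
  ultimately show ?thesis by (simp add: bounded_bilinear.zero_left[OF Q(1)])
qed

locale holonomy_projector =
  fixes X :: "(real^'n::finite) set" and f :: "'n tp \<Rightarrow> real^'n"
    and U :: "'n tp set" and hh :: "'n tp \<Rightarrow> 'n tp \<Rightarrow> 'n tp"
  assumes spray: "is_spray X f" and open_U: "open U"
    and linear_hh: "\<And>u. u \<in> U \<Longrightarrow> linear (hh u)"
    and smooth_hh: "\<And>v. smooth_on U (\<lambda>u. hh u v)"
    and hh_idem: "\<And>u v. u \<in> U \<Longrightarrow> hh u (hh u v) = hh u v"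
    and range_hh: "\<And>u. u \<in> U \<Longrightarrow> range (hh u) = holonomy X f u"
begin

lemma hh_differentiable: "u \<in> U \<Longrightarrow> (\<lambda>p. hh p v) differentiable (at u)"
  using smooth_on_differentiable_on[OF smooth_hh] open_U differentiable_on_eq_differentiable_at by blast

lemma has_derivative_hh: "u \<in> U \<Longrightarrow> ((\<lambda>p. hh p v) has_derivative (\<lambda>w. family_deriv hh u w v)) (at u)"
  using has_derivative_family_apply[OF open_U _ linear_hh hh_differentiable has_derivative_const[of v]]
  by (simp add: linear_0[OF linear_hh])

lemma hh_fixes_holonomy: "u \<in> U \<Longrightarrow> h \<in> holonomy X f u \<Longrightarrow> hh u h = h"
  using range_hh hh_idem by (metis imageE)

lemma first_order_sol_differential:
  assumes u: "u \<in> U" and E: "first_order_sol U hh u E"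
  shows "linear (frechet_derivative E (at u))"
    and "\<And>h. h \<in> holonomy X f u \<Longrightarrow> frechet_derivative E (at u) h = 0"
proof -
  have "(E has_derivative frechet_derivative E (at u)) (at u)"
    using E open_U u smooth_on_differentiable_on has_frechet_derivative_on
    unfolding first_order_sol_def by blast
  then show "linear (frechet_derivative E (at u))" by (rule has_derivative_linear)
  show "frechet_derivative E (at u) h = 0" if "h \<in> holonomy X f u" for h
    using E hh_fixes_holonomy[OF u that] unfolding first_order_sol_def P_h_def by metis
qed

context
  fixes u :: "'n tp" and L :: "'n tp \<Rightarrow> real"
  assumes u: "u \<in> U" and L: "linear L" and L_holonomy: "\<And>h. h \<in> holonomy X f u \<Longrightarrow> L h = 0"
begin

lemma L_hh_eq_0: "L (hh u v) = 0"
  using L_holonomy range_hh[OF u] by blast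

lemma family_deriv_hh_absorb: "L (family_deriv hh u w v) = L (family_deriv hh u w (hh u v))"
  by (rule section_derivative_modulo_range[OF open_U u linear_hh hh_differentiable[OF u] L L_hh_eq_0
        has_derivative_hh[OF u] open_U u order_refl hh_idem])

lemma hol_field_derivative:
  assumes Z: "(V, Z) \<in> hol_fields X f" and uV: "u \<in> V"
  shows "L (frechet_derivative Z (at u) w) = L (family_deriv hh u w (Z u))"
proof -
  have V: "open V" and dZ: "Z differentiable_on V"
    using hol_fields_smooth[OF spray Z] smooth_on_differentiable_on by blast+
  show ?thesis
    by (rule section_derivative_modulo_range[OF open_U u linear_hh hh_differentiable[OF u] L L_hh_eq_0
          has_frechet_derivative_on[OF dZ V uV] open_Int[OF V open_U]])
       (use uV u hh_fixes_holonomy hol_fields_in_holonomy[OF Z] in auto)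
qed

lemma bilinear_L_family_deriv: "bilinear (\<lambda>x y. L (family_deriv hh u x y))"
proof -
  have direction: "linear (\<lambda>w. family_deriv hh u w v)" for v
    by (rule linear_family_deriv_direction, rule hh_differentiable[OF u])
  have "linear (\<lambda>x. L (family_deriv hh u x y))" for y
    using linear_compose[OF direction L] by (simp add: o_def)
  moreover have "linear (\<lambda>y. L (family_deriv hh u x y))" for x
    using linear_compose[OF linear_family_deriv L] by (simp add: o_def)
  ultimately show ?thesis unfolding bilinear_def by blast
qed

lemma family_deriv_symmetric:
  assumes "x \<in> holonomy X f u" "y \<in> holonomy X f u"
  shows "L (family_deriv hh u x y) = L (family_deriv hh u y x)"
proof -
  let ?G = "{Z u | V Z. (V, Z) \<in> hol_fields X f \<and> u \<in> V}"
  have "L (family_deriv hh u x y) = L (family_deriv hh u y x)" if xy: "x \<in> ?G" "y \<in> ?G" for x y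
  proof -
    obtain V Z V' Z' where Z: "(V, Z) \<in> hol_fields X f" "u \<in> V" "x = Z u"
      and Z': "(V', Z') \<in> hol_fields X f" "u \<in> V'" "y = Z' u"
      using xy by blast
    have "L (lie_bracket Z Z' u) = 0"
      using L_holonomy hol_fields_in_holonomy[OF hol_fields.bracket[OF Z(1) Z'(1)]] Z(2) Z'(2) by blast
    then have "L (frechet_derivative Z' (at u) (Z u)) = L (frechet_derivative Z (at u) (Z' u))"
      unfolding lie_bracket_def linear_diff[OF L] by simp
    then show ?thesis
      using hol_field_derivative[OF Z(1,2)] hol_field_derivative[OF Z'(1,2)] Z(3) Z'(3) by simp
  qed
  moreover have "bilinear (\<lambda>x y. L (family_deriv hh u y x))"
    using bilinear_L_family_deriv unfolding bilinear_def by blast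
  moreover have "holonomy X f u \<subseteq> span ?G"
    unfolding holonomy_def by simp
  ultimately show ?thesis
    using bilinear_eq[OF bilinear_L_family_deriv _ _ _ assms] by blast
qed

lemma family_deriv_liouville:
  assumes "h \<in> holonomy X f u"
  shows "L (family_deriv hh u (liouville u) h) = L (liouville h)"
proof (rule linear_eq_on_span[of "\<lambda>h. L (family_deriv hh u (liouville u) h)" "\<lambda>h. L (liouville h)"])
  from bounded_linear.linear[OF bounded_linear_liouville]
  show "linear (\<lambda>h. L (family_deriv hh u (liouville u) h))" "linear (\<lambda>h. L (liouville h))"
    using linear_compose[OF linear_family_deriv L] linear_compose[OF _ L] by (simp_all add: o_def)
  show "h \<in> span {Z u | V Z. (V, Z) \<in> hol_fields X f \<and> u \<in> V}"
    using assms unfolding holonomy_def .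
  fix x assume "x \<in> {Z u | V Z. (V, Z) \<in> hol_fields X f \<and> u \<in> V}"
  then obtain V Z where Z: "(V, Z) \<in> hol_fields X f" "u \<in> V" "x = Z u" by blast
  have "L (frechet_derivative Z (at u) (liouville u)) = L (liouville (Z u))"
    using liouville_bracket_annihilated[OF spray Z(1,2) L L_holonomy]
    unfolding lie_bracket_def frechet_derivative_liouville linear_diff[OF L] by simp
  then show "L (family_deriv hh u (liouville u) x) = L (liouville x)"
    using hol_field_derivative[OF Z(1,2)] Z(3) by simp
qed

lemma second_order_form_exists:
  assumes C: "liouville u \<notin> holonomy X f u"
  obtains Q where "bilinear Q" "\<And>x y. Q x y = Q y x"
    "\<And>w. Q w (liouville u) = 2 * L w - L (liouville w)"
    "\<And>w v. Q w (hh u v) = - L (family_deriv hh u w v)"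
proof -
  have H: "subspace (holonomy X f u)"
    unfolding holonomy_def by (rule subspace_span)
  have \<gamma>: "linear (\<lambda>w. 2 * L w - L (liouville w))"
    using linear_compose_sub[OF linear_compose_scale_right[OF L, of 2]
        linear_compose[OF bounded_linear.linear[OF bounded_linear_liouville] L]]
    by (simp add: o_def)
  have \<beta>: "bilinear (\<lambda>w h. - L (family_deriv hh u w h))"
    using bilinear_L_family_deriv unfolding bilinear_def by (simp add: linear_compose_neg)
  have sym: "- L (family_deriv hh u h h') = - L (family_deriv hh u h' h)"
    if "h \<in> holonomy X f u" "h' \<in> holonomy X f u" for h h'
    using family_deriv_symmetric[OF that] by simp
  have compat: "- L (family_deriv hh u (liouville u) h) = 2 * L h - L (liouville h)"
    if "h \<in> holonomy X f u" for h
    using family_deriv_liouville[OF that] L_holonomy[OF that] by simp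
  obtain Q where Q: "bilinear Q" "\<And>x y. Q x y = Q y x"
    "\<And>w. Q w (liouville u) = 2 * L w - L (liouville w)"
    "\<And>w h. h \<in> holonomy X f u \<Longrightarrow> Q w h = - L (family_deriv hh u w h)"
    using symmetric_bilinear_prescribed[OF H C \<gamma> \<beta> sym compat] by blast
  show thesis
  proof (rule that[OF Q(1,2,3)])
    show "Q w (hh u v) = - L (family_deriv hh u w v)" for w v
      using Q(4)[of "hh u v" w] range_hh[OF u] family_deriv_hh_absorb by auto
  qed
qed

end

lemma has_derivative_P_h_quadratic:
  fixes L :: "'n tp \<Rightarrow> real" and Q :: "'n tp \<Rightarrow> 'n tp \<Rightarrow> real"
  assumes u: "u \<in> U" and Q: "bounded_bilinear Q" "\<And>x y. Q x y = Q y x" and L: "bounded_linear L"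
  shows "(P_h hh (\<lambda>p. c + L (p - u) + Q (p - u) (p - u) / 2) v has_derivative
           (\<lambda>w. L (family_deriv hh u w v) + Q w (hh u v))) (at u)"
proof -
  have "P_h hh (\<lambda>p. c + L (p - u) + Q (p - u) (p - u) / 2) v = (\<lambda>p. L (hh p v) + Q (p - u) (hh p v))"
    by (rule ext) (simp add: P_h_def frechet_derivative_at[OF has_derivative_quadratic[OF Q L], symmetric])
  moreover have "((\<lambda>p. L (hh p v) + Q (p - u) (hh p v)) has_derivative
      (\<lambda>w. L (family_deriv hh u w v) + Q w (hh u v))) (at u)"
    by (intro has_derivative_add bounded_linear.has_derivative[OF L] has_derivative_hh[OF u]
        has_derivative_bilinear_centred[OF Q(1) has_derivative_hh[OF u]])
  ultimately show ?thesis by simp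
qed

lemma quadratic_second_order_sol:
  fixes u :: "'n tp" and E L :: "'n tp \<Rightarrow> real" and Q :: "'n tp \<Rightarrow> 'n tp \<Rightarrow> real"
  defines "L \<equiv> frechet_derivative E (at u)"
    and "E2 \<equiv> \<lambda>p. E u + L (p - u) + Q (p - u) (p - u) / 2"
  assumes u: "u \<in> U" and E: "first_order_sol U hh u E"
    and Q: "bilinear Q" "\<And>x y. Q x y = Q y x"
    and Q_liouville: "\<And>w. Q w (liouville u) = 2 * L w - L (liouville w)"
    and Q_hh: "\<And>w v. Q w (hh u v) = - L (family_deriv hh u w v)"
  shows "second_order_sol U hh u E2 \<and> E2 u = E u \<and> frechet_derivative E2 (at u) = L"
proof -
  have E_sol: "LC_minus_2 E u = 0" "\<And>v. P_h hh E v u = 0"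
    using E unfolding first_order_sol_def by auto
  have L_bl: "bounded_linear L"
    using first_order_sol_differential(1)[OF u E] unfolding L_def by (simp add: linear_conv_bounded_linear)
  have Q_bb: "bounded_bilinear Q" using Q(1) bilinear_conv_bounded_bilinear by blast
  have E2_u: "E2 u = E u"
    unfolding E2_def by (simp add: bounded_bilinear.zero_left[OF Q_bb] linear_0[OF bounded_linear.linear[OF L_bl]])
  have dE2_u: "frechet_derivative E2 (at u) = L"
    unfolding E2_def frechet_derivative_at[OF has_derivative_quadratic[OF Q_bb Q(2) L_bl], symmetric]
    by (simp add: bounded_bilinear.zero_left[OF Q_bb])
  have "frechet_derivative (LC_minus_2 E2) (at u) = (\<lambda>_. 0)"
    using frechet_derivative_at[OF has_derivative_LC_minus_2_quadratic[OF Q_bb Q(2) L_bl]]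
    unfolding E2_def by (simp add: Q_liouville)
  moreover have "frechet_derivative (P_h hh E2 v) (at u) = (\<lambda>_. 0)" for v
    using frechet_derivative_at[OF has_derivative_P_h_quadratic[OF u Q_bb Q(2) L_bl]]
    unfolding E2_def by (simp add: Q_hh)
  moreover have "smooth_on U E2"
    unfolding E2_def by (rule smooth_on_quadratic[OF open_U Q_bb L_bl])
  moreover have "LC_minus_2 E2 u = 0" "P_h hh E2 v u = 0" for v
    using E_sol(1) E_sol(2)[of v] unfolding LC_minus_2_def P_h_def dE2_u E2_u L_def
    by (simp_all add: bounded_bilinear.zero_left[OF Q_bb])
  ultimately show ?thesis
    unfolding second_order_sol_def first_order_sol_def using E2_u dE2_u by blast
qed

end

theorem mainTheorem4:
  fixes X :: "(real^'n::finite) set"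
    and f :: "'n tp \<Rightarrow> real^'n"
    and U :: "'n tp set"
    and hh :: "'n tp \<Rightarrow> 'n tp \<Rightarrow> 'n tp"
  assumes spray: "is_spray X f"
    and U_open: "open U" and U_sub: "U \<subseteq> slit_TM X"
    and C_notin: "\<forall>u\<in>U. liouville u \<notin> holonomy X f u"
    and const_rank: "\<exists>r. \<forall>u\<in>U. dim (holonomy X f u) = r"
    and hh_lin: "\<forall>u\<in>U. linear (hh u)"
    and hh_smooth: "\<forall>v. smooth_on U (\<lambda>u. hh u v)"
    and hh_idem: "\<forall>u\<in>U. hh u \<circ> hh u = hh u"
    and hh_image: "\<forall>u\<in>U. range (hh u) = holonomy X f u"
    and u_in: "u \<in> U"
    and E1: "first_order_sol U hh u E"
  shows "\<exists>E2. second_order_sol U hh u E2 \<and> E2 u = E u \<and>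
              frechet_derivative E2 (at u) = frechet_derivative E (at u)"
proof -
  have "holonomy_projector X f U hh"
    unfolding holonomy_projector_def using spray U_open hh_lin hh_smooth hh_idem hh_image
    by (simp add: fun_eq_iff)
  then interpret holonomy_projector X f U hh .
  define L where "L = frechet_derivative E (at u)"
  have L: "linear L" and L_holonomy: "\<And>h. h \<in> holonomy X f u \<Longrightarrow> L h = 0"
    using first_order_sol_differential[OF u_in E1] unfolding L_def by blast+
  obtain Q where "bilinear Q" "\<And>x y. Q x y = Q y x"
    "\<And>w. Q w (liouville u) = 2 * L w - L (liouville w)"
    "\<And>w v. Q w (hh u v) = - L (family_deriv hh u w v)"
    using second_order_form_exists[OF u_in L L_holonomy] C_notin u_in by blast
  from quadratic_second_order_sol[OF u_in E1 this[unfolded L_def]]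
  show ?thesis unfolding L_def by blast
qed

end
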